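(* Let $\{m_i\}_{i=1}^{\infty}$ and $\{n_j\}_{j=1}^{\infty}$ be sequences of real numbers with $0<m_1<m_2<\cdots$, $\sum_{i=1}^{\infty}1/m_i=\infty$, and $0<n_1<n_2<\cdots$, $\sum_{j=1}^{\infty}1/n_j=\infty$. Let $X,Y$ be nonnegative random variables with joint distribution function $H$. Then $H$ is uniquely determined by the countably many values $\{\mathcal{L}_H(m_i,n_j): i,j\in\mathbb{N}\}$ of its Laplace–Stieltjes transform; i.e., if $(X_1,Y_1)\sim H_1$ and $(X_2,Y_2)\sim H_2$ are nonnegative random vectors with $\mathcal{L}_{H_1}(m_i,n_j)=\mathcal{L}_{H_2}(m_i,n_j)$ for all $i,j\in\mathbb{N}$, then $H_1=H_2$.
   Context: For a random vector $(X,Y)$ in $[0,\infty)^2$ with joint distribution function $H(x,y)={\bf P}(X\le x,Y\le y)$, the bivariate Laplace–Stieltjes transform is $\mathcal{L}_H(s,t)={\bf E}[\exp(-sX-tY)]$, $s,t>0$. *)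

theory Defs
  imports "HOL-Probability.Probability"
begin

definition joint_cdf :: "'a measure \<Rightarrow> ('a \<Rightarrow> real) \<Rightarrow> ('a \<Rightarrow> real) \<Rightarrow> real \<Rightarrow> real \<Rightarrow> real" where
  "joint_cdf M X Y x y = measure M {\<omega> \<in> space M. X \<omega> \<le> x \<and> Y \<omega> \<le> y}"

definition bivariate_LST :: "'a measure \<Rightarrow> ('a \<Rightarrow> real) \<Rightarrow> ('a \<Rightarrow> real) \<Rightarrow> real \<Rightarrow> real \<Rightarrow> real" where
  "bivariate_LST M X Y s t = (\<integral>\<omega>. exp (- s * X \<omega> - t * Y \<omega>) \<partial>M)"

end

theory Submission
  imports Defs "HOL-Complex_Analysis.Complex_Analysis"
begin

text \<open>For a weight \<open>w\<close> with values in \<open>[0,1]\<close>, the weighted Laplace transform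
  \<open>z \<mapsto> E[w exp(-z X)]\<close> is bounded and holomorphic on the right half-plane. A bounded holomorphic
  function there that vanishes at points \<open>m\<^sub>i\<close> with \<open>\<Sum> 1/m\<^sub>i = \<infinity>\<close> is zero: moved to the unit disc by
  a Cayley transform, its zeros would violate the Blaschke condition. So two weighted Laplace
  transforms agreeing at the \<open>m\<^sub>i\<close> agree on the line \<open>Re z = 1\<close>, where they are Fourier transforms of
  the finite measures \<open>w exp(-X) dP\<close> pushed forward by \<open>X\<close>; Levy's uniqueness theorem identifies these
  measures and hence \<open>E[w; X \<le> x]\<close>. Taking \<open>w = exp(-n\<^sub>j Y)\<close> and then \<open>w = 1{X \<le> x}\<close> with the roles of
  \<open>X\<close> and \<open>Y\<close> exchanged recovers \<open>H(x,y)\<close>.\<close>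

lemma norm_exp_minus_one_minus_le:
  fixes u :: complex
  shows "norm (exp u - 1 - u) \<le> (norm u)\<^sup>2 * exp (norm u)"
proof -
  have sums: "(\<lambda>k. u ^ (k + 2) /\<^sub>R fact (k + 2)) sums (exp u - (\<Sum>k<2. u ^ k /\<^sub>R fact k))"
    by (intro sums_split_initial_segment exp_converges)
  have summable_norm_tail: "summable (\<lambda>k. norm (u ^ (k + 2) /\<^sub>R fact (k + 2)))"
    using summable_norm_exp[of u]
    by (intro summable_ignore_initial_segment) (auto simp: norm_power norm_divide divide_simps)
  have exp_series: "(\<lambda>k. norm u ^ k / fact k) sums exp (norm u)"
    using exp_converges[of "norm u"] by (simp add: divide_inverse mult.commute)
  have "exp u - 1 - u = (\<Sum>k. u ^ (k + 2) /\<^sub>R fact (k + 2))"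
    using sums by (simp add: sums_iff eval_nat_numeral)
  also have "norm \<dots> \<le> (\<Sum>k. norm (u ^ (k + 2) /\<^sub>R fact (k + 2)))"
    using summable_norm_tail by (rule summable_norm)
  also have "\<dots> \<le> (\<Sum>k. (norm u)\<^sup>2 * (norm u ^ k / fact k))"
  proof (rule suminf_le)
    fix k
    have "norm (u ^ (k + 2) /\<^sub>R fact (k + 2)) = (norm u)\<^sup>2 * norm u ^ k / fact (k + 2)"
      by (simp add: norm_mult norm_power power_add power2_eq_square field_simps del: of_nat_add)
    also have "\<dots> \<le> (norm u)\<^sup>2 * norm u ^ k / fact k"
      by (intro divide_left_mono fact_mono) auto
    finally show "norm (u ^ (k + 2) /\<^sub>R fact (k + 2)) \<le> (norm u)\<^sup>2 * (norm u ^ k / fact k)"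
      by simp
  next
    show "summable (\<lambda>k. (norm u)\<^sup>2 * (norm u ^ k / fact k))"
      using exp_series by (intro summable_mult sums_summable)
  qed (rule summable_norm_tail)
  also have "\<dots> = (norm u)\<^sup>2 * exp (norm u)"
    using sums_mult[OF exp_series, of "(norm u)\<^sup>2"] by (rule sums_unique[symmetric])
  finally show ?thesis .
qed

lemma power2_mul_exp_neg_le:
  fixes x r :: real
  assumes "0 \<le> x" "0 < r"
  shows "x\<^sup>2 * exp (- r * x) \<le> 4 / r\<^sup>2"
proof -
  have "(r * x / 2)\<^sup>2 \<le> (1 + r * x / 2)\<^sup>2"
    using assms by (intro power_mono) auto
  also have "\<dots> \<le> (exp (r * x / 2))\<^sup>2"
    using assms by (intro power_mono exp_ge_add_one_self) auto
  also have "\<dots> = exp (r * x)"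
    by (simp add: power2_eq_square flip: exp_add)
  finally have "r\<^sup>2 * x\<^sup>2 \<le> 4 * exp (r * x)"
    by (simp add: power_mult_distrib power_divide)
  then show ?thesis
    using assms by (simp add: exp_minus field_simps)
qed

lemma has_field_derivative_if_quadratic_remainder:
  fixes f :: "complex \<Rightarrow> complex"
  assumes "0 < \<delta>" "\<And>h. norm h < \<delta> \<Longrightarrow> norm (f (z + h) - f z - h * D) \<le> C * (norm h)\<^sup>2"
  shows "(f has_field_derivative D) (at z)"
proof -
  have "((\<lambda>y. (f y - f z) / (y - z) - D) \<longlongrightarrow> 0) (at z)"
  proof (rule Lim_null_comparison)
    show "\<forall>\<^sub>F y in at z. norm ((f y - f z) / (y - z) - D) \<le> C * norm (y - z)"
      unfolding eventually_at
    proof (intro exI[of _ \<delta>] conjI ballI impI)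
      fix y assume y: "y \<in> UNIV" "y \<noteq> z \<and> dist y z < \<delta>"
      then have ne: "y - z \<noteq> 0" by auto
      have "(f y - f z) / (y - z) - D = (f (z + (y - z)) - f z - (y - z) * D) / (y - z)"
        using ne by (simp add: field_simps)
      also have "norm \<dots> \<le> C * (norm (y - z))\<^sup>2 / norm (y - z)"
        unfolding norm_divide
        by (rule divide_right_mono[OF assms(2)]) (use y in \<open>auto simp: dist_norm\<close>)
      also have "\<dots> = C * norm (y - z)"
        using ne by (simp add: power2_eq_square)
      finally show "norm ((f y - f z) / (y - z) - D) \<le> C * norm (y - z)" .
    qed (use assms(1) in auto)
    show "((\<lambda>y. C * norm (y - z)) \<longlongrightarrow> 0) (at z)"
      by (rule tendsto_eq_intros refl | simp)+
  qed
  then show ?thesis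
    unfolding has_field_derivative_iff by (simp add: LIM_zero_iff)
qed

lemma norm_laplace_kernel_remainder_le:
  fixes z h :: complex and x :: real
  assumes x: "0 \<le> x" and h: "norm h < Re z / 2"
  shows "norm (exp (- z * of_real x) * (exp (- h * of_real x) - 1 + h * of_real x))
    \<le> 16 / (Re z)\<^sup>2 * (norm h)\<^sup>2"
proof -
  have r: "0 < Re z"
    using h norm_ge_zero[of h] by linarith
  have "norm (exp (- h * of_real x) - 1 + h * of_real x) \<le> (norm h * x)\<^sup>2 * exp (norm h * x)"
    using norm_exp_minus_one_minus_le[of "- h * of_real x"] x by (simp add: norm_mult)
  also have "\<dots> \<le> (norm h * x)\<^sup>2 * exp (Re z / 2 * x)"
    using mult_right_mono[OF less_imp_le[OF h] x] by (intro mult_left_mono) auto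
  finally have remainder: "norm (exp (- h * of_real x) - 1 + h * of_real x)
    \<le> (norm h * x)\<^sup>2 * exp (Re z / 2 * x)" .
  have "norm (exp (- z * of_real x) * (exp (- h * of_real x) - 1 + h * of_real x))
    \<le> exp (- Re z * x) * ((norm h * x)\<^sup>2 * exp (Re z / 2 * x))"
    unfolding norm_mult norm_exp_eq_Re using remainder by (simp add: mult_left_mono)
  also have "\<dots> = (norm h)\<^sup>2 * (x\<^sup>2 * exp (- (Re z / 2) * x))"
    by (simp add: power_mult_distrib field_simps flip: exp_add)
  also have "\<dots> \<le> (norm h)\<^sup>2 * (4 / (Re z / 2)\<^sup>2)"
    using power2_mul_exp_neg_le[of x "Re z / 2"] x r by (intro mult_left_mono) auto
  also have "\<dots> = 16 / (Re z)\<^sup>2 * (norm h)\<^sup>2"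
    by (simp add: power_divide)
  finally show ?thesis .
qed

definition weighted_laplace :: "'a measure \<Rightarrow> ('a \<Rightarrow> real) \<Rightarrow> ('a \<Rightarrow> real) \<Rightarrow> complex \<Rightarrow> complex"
  where "weighted_laplace M X w z = (\<integral>\<omega>. of_real (w \<omega>) * exp (- z * of_real (X \<omega>)) \<partial>M)"

lemma weighted_laplace_of_real:
  "weighted_laplace M X w (of_real s) = of_real (\<integral>\<omega>. w \<omega> * exp (- s * X \<omega>) \<partial>M)"
proof -
  have "weighted_laplace M X w (of_real s) = (\<integral>\<omega>. of_real (w \<omega> * exp (- s * X \<omega>)) \<partial>M)"
    unfolding weighted_laplace_def
    by (intro Bochner_Integration.integral_cong refl) (simp add: of_real_exp)
  also have "\<dots> = of_real (\<integral>\<omega>. w \<omega> * exp (- s * X \<omega>) \<partial>M)"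
    by (rule integral_complex_of_real)
  finally show ?thesis .
qed

text \<open>The factor \<open>exp(-X)\<close> moves the Fourier transform of \<open>w dM\<close> pushed forward by \<open>X\<close> from the
  boundary line \<open>Re z = 0\<close> of the Laplace transform to the line \<open>Re z = 1\<close>.\<close>

definition tilted_distr :: "'a measure \<Rightarrow> ('a \<Rightarrow> real) \<Rightarrow> ('a \<Rightarrow> real) \<Rightarrow> real measure"
  where "tilted_distr M X w = distr (density M (\<lambda>\<omega>. ennreal (w \<omega> * exp (- X \<omega>)))) borel X"

lemma sets_tilted_distr [simp]: "sets (tilted_distr M X w) = sets borel"
  by (simp add: tilted_distr_def)

locale weighted_nonneg_rv = prob_space M for M :: "'a measure" +
  fixes X w :: "'a \<Rightarrow> real"
  assumes X_measurable [measurable]: "X \<in> borel_measurable M"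
    and w_measurable [measurable]: "w \<in> borel_measurable M"
    and X_nonneg: "\<And>\<omega>. \<omega> \<in> space M \<Longrightarrow> 0 \<le> X \<omega>"
    and w_nonneg: "\<And>\<omega>. \<omega> \<in> space M \<Longrightarrow> 0 \<le> w \<omega>"
    and w_le_1: "\<And>\<omega>. \<omega> \<in> space M \<Longrightarrow> w \<omega> \<le> 1"
begin

lemma norm_laplace_kernel_le_1:
  assumes "\<omega> \<in> space M" "0 \<le> Re z"
  shows "norm (of_real (w \<omega>) * exp (- z * of_real (X \<omega>))) \<le> 1"
proof -
  have "exp (- Re z * X \<omega>) \<le> 1"
    using assms X_nonneg mult_nonneg_nonneg[of "Re z" "X \<omega>"] by simp
  then show ?thesis
    using assms w_nonneg w_le_1 by (simp add: norm_mult norm_exp_eq_Re mult_le_one)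
qed

lemma integrable_laplace_kernel:
  assumes "0 \<le> Re z"
  shows "integrable M (\<lambda>\<omega>. of_real (w \<omega>) * exp (- z * of_real (X \<omega>)))"
proof (rule integrable_const_bound[where B = 1])
  show "AE \<omega> in M. norm (of_real (w \<omega>) * exp (- z * of_real (X \<omega>))) \<le> 1"
    by (rule AE_I2) (rule norm_laplace_kernel_le_1[OF _ assms])
qed measurable

lemma norm_weighted_laplace_le_1:
  assumes "0 \<le> Re z"
  shows "norm (weighted_laplace M X w z) \<le> 1"
  unfolding weighted_laplace_def
proof (rule order_trans[OF integral_norm_bound], rule integral_le_const)
  show "AE \<omega> in M. norm (of_real (w \<omega>) * exp (- z * of_real (X \<omega>))) \<le> 1"
    by (rule AE_I2) (rule norm_laplace_kernel_le_1[OF _ assms])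
  show "integrable M (\<lambda>\<omega>. norm (of_real (w \<omega>) * exp (- z * of_real (X \<omega>))))"
    by (intro integrable_norm integrable_laplace_kernel assms)
qed

lemma integrable_laplace_kernel_deriv:
  assumes z: "0 < Re z"
  shows "integrable M (\<lambda>\<omega>. of_real (- w \<omega> * X \<omega>) * exp (- z * of_real (X \<omega>)))"
proof (rule integrable_const_bound[where B = "1 / Re z"])
  show "AE \<omega> in M. norm (of_real (- w \<omega> * X \<omega>) * exp (- z * of_real (X \<omega>))) \<le> 1 / Re z"
  proof (rule AE_I2)
    fix \<omega> assume \<omega>: "\<omega> \<in> space M"
    have "Re z * X \<omega> \<le> exp (Re z * X \<omega>)"
      using exp_ge_add_one_self[of "Re z * X \<omega>"] by linarith
    then have "X \<omega> * exp (- Re z * X \<omega>) \<le> 1 / Re z"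
      using z by (simp add: exp_minus field_simps)
    then have "w \<omega> * (X \<omega> * exp (- Re z * X \<omega>)) \<le> 1 * (1 / Re z)"
      using \<omega> z X_nonneg w_nonneg w_le_1 by (intro mult_mono) auto
    then show "norm (of_real (- w \<omega> * X \<omega>) * exp (- z * of_real (X \<omega>))) \<le> 1 / Re z"
      using \<omega> X_nonneg w_nonneg by (simp add: norm_mult norm_exp_eq_Re abs_mult mult.assoc)
  qed
qed measurable

lemma weighted_laplace_remainder_eq:
  assumes z: "0 < Re z" and zh: "0 \<le> Re (z + h)"
  shows "weighted_laplace M X w (z + h) - weighted_laplace M X w z
      - h * weighted_laplace M X (\<lambda>\<omega>. - w \<omega> * X \<omega>) z
    = (\<integral>\<omega>. of_real (w \<omega>) * (exp (- z * of_real (X \<omega>)) *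
        (exp (- h * of_real (X \<omega>)) - 1 + h * of_real (X \<omega>))) \<partial>M)"
proof -
  have i1: "integrable M (\<lambda>\<omega>. of_real (w \<omega>) * exp (- (z + h) * of_real (X \<omega>)))"
    using zh by (rule integrable_laplace_kernel)
  have i2: "integrable M (\<lambda>\<omega>. of_real (w \<omega>) * exp (- z * of_real (X \<omega>)))"
    using z by (intro integrable_laplace_kernel) simp
  have i3: "integrable M (\<lambda>\<omega>. h * (of_real (- w \<omega> * X \<omega>) * exp (- z * of_real (X \<omega>))))"
    using z by (intro integrable_mult_right integrable_laplace_kernel_deriv)
  have "weighted_laplace M X w (z + h) - weighted_laplace M X w z
      - h * weighted_laplace M X (\<lambda>\<omega>. - w \<omega> * X \<omega>) z
    = (\<integral>\<omega>. of_real (w \<omega>) * exp (- (z + h) * of_real (X \<omega>))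
        - of_real (w \<omega>) * exp (- z * of_real (X \<omega>))
        - h * (of_real (- w \<omega> * X \<omega>) * exp (- z * of_real (X \<omega>))) \<partial>M)"
    unfolding weighted_laplace_def
    using Bochner_Integration.integral_diff[OF Bochner_Integration.integrable_diff[OF i1 i2] i3]
      Bochner_Integration.integral_diff[OF i1 i2]
    by simp
  also have "\<dots> = (\<integral>\<omega>. of_real (w \<omega>) * (exp (- z * of_real (X \<omega>)) *
      (exp (- h * of_real (X \<omega>)) - 1 + h * of_real (X \<omega>))) \<partial>M)"
    by (intro Bochner_Integration.integral_cong refl) (simp add: algebra_simps flip: exp_add)
  finally show ?thesis .
qed

lemma norm_weighted_laplace_remainder_le:
  assumes h: "norm h < Re z / 2"
  shows "norm (weighted_laplace M X w (z + h) - weighted_laplace M X w z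
      - h * weighted_laplace M X (\<lambda>\<omega>. - w \<omega> * X \<omega>) z) \<le> 16 / (Re z)\<^sup>2 * (norm h)\<^sup>2"
proof -
  have z: "0 < Re z"
    using h norm_ge_zero[of h] by linarith
  have zh: "0 \<le> Re (z + h)"
    using h abs_Re_le_cmod[of h] by auto
  have bound: "AE \<omega> in M. norm (of_real (w \<omega>) * (exp (- z * of_real (X \<omega>)) *
      (exp (- h * of_real (X \<omega>)) - 1 + h * of_real (X \<omega>)))) \<le> 16 / (Re z)\<^sup>2 * (norm h)\<^sup>2"
  proof (rule AE_I2)
    fix \<omega> assume \<omega>: "\<omega> \<in> space M"
    have "w \<omega> * norm (exp (- z * of_real (X \<omega>)) * (exp (- h * of_real (X \<omega>)) - 1 + h * of_real (X \<omega>)))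
        \<le> 1 * (16 / (Re z)\<^sup>2 * (norm h)\<^sup>2)"
      using \<omega> w_nonneg w_le_1 norm_laplace_kernel_remainder_le[OF X_nonneg[OF \<omega>] h]
      by (intro mult_mono) auto
    then show "norm (of_real (w \<omega>) * (exp (- z * of_real (X \<omega>)) *
        (exp (- h * of_real (X \<omega>)) - 1 + h * of_real (X \<omega>)))) \<le> 16 / (Re z)\<^sup>2 * (norm h)\<^sup>2"
      using \<omega> w_nonneg by (simp add: norm_mult)
  qed
  show ?thesis
    unfolding weighted_laplace_remainder_eq[OF z zh]
  proof (rule order_trans[OF integral_norm_bound], rule integral_le_const[OF _ bound])
    show "integrable M (\<lambda>\<omega>. norm (of_real (w \<omega>) * (exp (- z * of_real (X \<omega>)) *
        (exp (- h * of_real (X \<omega>)) - 1 + h * of_real (X \<omega>)))))"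
      by (intro integrable_norm integrable_const_bound[OF bound]) measurable
  qed
qed

lemma has_field_derivative_weighted_laplace:
  assumes "0 < Re z"
  shows "(weighted_laplace M X w has_field_derivative weighted_laplace M X (\<lambda>\<omega>. - w \<omega> * X \<omega>) z) (at z)"
  by (rule has_field_derivative_if_quadratic_remainder[where \<delta> = "Re z / 2" and C = "16 / (Re z)\<^sup>2"])
     (use assms norm_weighted_laplace_remainder_le in auto)

lemma weighted_laplace_holomorphic: "weighted_laplace M X w holomorphic_on {z. 0 < Re z}"
  using has_field_derivative_weighted_laplace
  by (subst holomorphic_on_open) (auto simp: open_halfspace_Re_gt)

lemma integral_tilted_distr:
  fixes f :: "real \<Rightarrow> 'b::{banach, second_countable_topology}"
  assumes [measurable]: "f \<in> borel_measurable borel"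
  shows "integral\<^sup>L (tilted_distr M X w) f = (\<integral>\<omega>. (w \<omega> * exp (- X \<omega>)) *\<^sub>R f (X \<omega>) \<partial>M)"
  unfolding tilted_distr_def using w_nonneg
  by (subst integral_distr) (auto intro!: integral_density AE_I2)

lemma finite_measure_tilted_distr: "finite_measure (tilted_distr M X w)"
proof
  have "emeasure (tilted_distr M X w) (space (tilted_distr M X w))
      = (\<integral>\<^sup>+\<omega>. ennreal (w \<omega> * exp (- X \<omega>)) * indicator (space M) \<omega> \<partial>M)"
    unfolding tilted_distr_def by (simp add: emeasure_distr emeasure_density)
  also have "\<dots> \<le> (\<integral>\<^sup>+\<omega>. 1 \<partial>M)"
    using X_nonneg w_le_1 w_nonneg
    by (intro nn_integral_mono) (auto simp: indicator_def intro!: mult_le_one)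
  also have "\<dots> = 1"
    by (simp add: emeasure_space_1)
  finally show "emeasure (tilted_distr M X w) (space (tilted_distr M X w)) \<noteq> \<infinity>"
    by (auto simp: top_unique)
qed

lemma char_tilted_distr: "char (tilted_distr M X w) t = weighted_laplace M X w (1 - \<i> * of_real t)"
  unfolding char_def weighted_laplace_def
  by (subst integral_tilted_distr, measurable, intro Bochner_Integration.integral_cong refl)
     (simp add: scaleR_conv_of_real of_real_exp algebra_simps flip: exp_add)

lemma weighted_cdf_eq_integral_tilted_distr:
  "(\<integral>\<omega>. indicator {..y} (X \<omega>) * w \<omega> \<partial>M) = (\<integral>x. indicator {..y} x * exp x \<partial>tilted_distr M X w)"
  by (subst integral_tilted_distr, measurable, intro Bochner_Integration.integral_cong refl)
     (simp add: indicator_def exp_minus field_simps)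

end

lemma normalized_finite_measure:
  fixes \<mu> :: "real measure"
  assumes \<mu>: "finite_measure \<mu>" "sets \<mu> = sets borel"
    and c: "c = measure \<mu> (space \<mu>)" "0 < c"
  shows "real_distribution (density \<mu> (\<lambda>_. ennreal (1 / c)))"
    and "char (density \<mu> (\<lambda>_. ennreal (1 / c))) t = char \<mu> t / of_real c"
    and "A \<in> sets \<mu> \<Longrightarrow> emeasure \<mu> A = ennreal c * emeasure (density \<mu> (\<lambda>_. ennreal (1 / c))) A"
proof -
  interpret finite_measure \<mu> by (rule \<mu>(1))
  have "emeasure (density \<mu> (\<lambda>_. ennreal (1 / c))) (space \<mu>) = 1"
    using c by (simp add: emeasure_density_const emeasure_eq_measure ennreal_mult'[symmetric])
  then have "prob_space (density \<mu> (\<lambda>_. ennreal (1 / c)))"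
    by (intro prob_spaceI) simp
  then show "real_distribution (density \<mu> (\<lambda>_. ennreal (1 / c)))"
    using \<mu>(2) by (simp add: real_distribution_def real_distribution_axioms_def)
  have "(\<lambda>x. iexp (t * x)) \<in> borel_measurable \<mu>"
    unfolding measurable_cong_sets[OF \<mu>(2) refl] by measurable
  then show "char (density \<mu> (\<lambda>_. ennreal (1 / c))) t = char \<mu> t / of_real c"
    unfolding char_def using c
    by (subst integral_density) (auto simp: scaleR_conv_of_real divide_inverse mult.commute)
  show "emeasure \<mu> A = ennreal c * emeasure (density \<mu> (\<lambda>_. ennreal (1 / c))) A"
    if "A \<in> sets \<mu>"
    using that c by (simp add: emeasure_density_const ennreal_mult'[symmetric] mult.assoc[symmetric])
qed

lemma finite_measure_eq_if_char_eq:
  fixes \<mu> \<nu> :: "real measure"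
  assumes \<mu>: "finite_measure \<mu>" "sets \<mu> = sets borel"
    and \<nu>: "finite_measure \<nu>" "sets \<nu> = sets borel"
    and char_eq: "char \<mu> = char \<nu>"
  shows "\<mu> = \<nu>"
proof -
  interpret \<mu>: finite_measure \<mu> by (rule \<mu>(1))
  interpret \<nu>: finite_measure \<nu> by (rule \<nu>(1))
  have char_0: "char M 0 = of_real (measure M (space M))" for M
    by (simp add: char_def scaleR_conv_of_real)
  define c where "c = measure \<mu> (space \<mu>)"
  have c_eq: "c = measure \<nu> (space \<nu>)"
    using char_0[of \<mu>] char_0[of \<nu>] char_eq by (simp add: c_def)
  show ?thesis
  proof (cases "c = 0")
    case True
    then have "measure \<mu> (space \<mu>) = 0" "measure \<nu> (space \<nu>) = 0"
      using c_eq by (auto simp: c_def)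
    then have "emeasure \<mu> A = 0" "emeasure \<nu> A = 0" if "A \<in> sets borel" for A
      using that \<mu>(2) \<nu>(2) \<mu>.bounded_measure[of A] \<nu>.bounded_measure[of A]
      by (auto simp: \<mu>.emeasure_eq_measure \<nu>.emeasure_eq_measure intro: antisym measure_nonneg)
    then show ?thesis
      using \<mu>(2) \<nu>(2) by (intro measure_eqI) auto
  next
    case False
    then have c: "0 < c"
      by (simp add: c_def order_le_neq_trans)
    have "density \<mu> (\<lambda>_. ennreal (1 / c)) = density \<nu> (\<lambda>_. ennreal (1 / c))"
      using normalized_finite_measure[OF \<mu> c_def c] normalized_finite_measure[OF \<nu> c_eq c] char_eq
      by (intro Levy_uniqueness) auto
    then show ?thesis
      using normalized_finite_measure(3)[OF \<mu> c_def c] normalized_finite_measure(3)[OF \<nu> c_eq c] \<mu>(2) \<nu>(2)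
      by (intro measure_eqI) auto
  qed
qed

lemma weighted_cdf_eq_if_weighted_laplace_eq_on_line:
  assumes rv1: "weighted_nonneg_rv M1 X1 w1" and rv2: "weighted_nonneg_rv M2 X2 w2"
    and eq: "\<And>t. weighted_laplace M1 X1 w1 (1 - \<i> * of_real t) = weighted_laplace M2 X2 w2 (1 - \<i> * of_real t)"
  shows "(\<integral>\<omega>. indicator {..y} (X1 \<omega>) * w1 \<omega> \<partial>M1) = (\<integral>\<omega>. indicator {..y} (X2 \<omega>) * w2 \<omega> \<partial>M2)"
proof -
  interpret rv1: weighted_nonneg_rv M1 X1 w1 by (rule rv1)
  interpret rv2: weighted_nonneg_rv M2 X2 w2 by (rule rv2)
  have "tilted_distr M1 X1 w1 = tilted_distr M2 X2 w2"
    using rv1.finite_measure_tilted_distr rv2.finite_measure_tilted_distr eq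
    by (intro finite_measure_eq_if_char_eq) (auto simp: rv1.char_tilted_distr rv2.char_tilted_distr)
  then show ?thesis
    by (simp add: rv1.weighted_cdf_eq_integral_tilted_distr rv2.weighted_cdf_eq_integral_tilted_distr)
qed

lemma norm_one_minus_cnj_mult_power2:
  "(norm (1 - cnj a * w))\<^sup>2 = (norm (w - a))\<^sup>2 + (1 - (norm a)\<^sup>2) * (1 - (norm w)\<^sup>2)"
  by (simp only: cmod_power2) (simp add: algebra_simps power2_eq_square)

lemma norm_inverse_blaschke_factor_le:
  fixes a w :: complex
  assumes aw: "norm a < norm w" and w: "norm w \<le> 1"
  shows "norm (1 - cnj a * w) / norm (w - a)
    \<le> sqrt (1 + (1 - (norm a)\<^sup>2) * (1 - (norm w)\<^sup>2) / (norm w - norm a)\<^sup>2)"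
proof (rule real_le_rsqrt)
  define K where "K = (1 - (norm a)\<^sup>2) * (1 - (norm w)\<^sup>2)"
  have K: "0 \<le> K"
    unfolding K_def using aw w by (intro mult_nonneg_nonneg) (auto simp: power_le_one)
  have dist: "norm w - norm a \<le> norm (w - a)"
    using norm_triangle_ineq2[of w a] by simp
  then have pos: "0 < norm (w - a)"
    using aw by linarith
  have "(norm (1 - cnj a * w) / norm (w - a))\<^sup>2 = ((norm (w - a))\<^sup>2 + K) / (norm (w - a))\<^sup>2"
    unfolding power_divide norm_one_minus_cnj_mult_power2 K_def ..
  also have "\<dots> = 1 + K / (norm (w - a))\<^sup>2"
    using pos by (simp add: field_simps)
  also have "\<dots> \<le> 1 + K / (norm w - norm a)\<^sup>2"
    using K dist aw by (intro add_left_mono divide_left_mono power_mono mult_pos_pos) auto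
  finally show "(norm (1 - cnj a * w) / norm (w - a))\<^sup>2 \<le> 1 + K / (norm w - norm a)\<^sup>2" .
qed

text \<open>The Blaschke factor \<open>(w - a) / (1 - cnj a w)\<close> has modulus tending to \<open>1\<close> at the unit circle, so
  the maximum principle on circles of radius \<open>r \<rightarrow> 1\<close> bounds the quotient by the same constant.\<close>

lemma divide_blaschke_factor_bounded:
  fixes g :: "complex \<Rightarrow> complex"
  assumes holo: "g holomorphic_on ball 0 1" and bound: "\<And>w. w \<in> ball 0 1 \<Longrightarrow> norm (g w) \<le> C"
    and a: "a \<in> ball 0 1" and zero: "g a = 0"
  obtains g1 where "g1 holomorphic_on ball 0 1" "\<And>w. w \<in> ball 0 1 \<Longrightarrow> norm (g1 w) \<le> C"
    "\<And>w. w \<noteq> a \<Longrightarrow> g1 w = g w * (1 - cnj a * w) / (w - a)"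
proof -
  define g1 where "g1 z = (if z = a then deriv g a else (g z - g a) / (z - a)) * (1 - cnj a * z)" for z
  have g1_holo: "g1 holomorphic_on ball 0 1"
    unfolding g1_def by (intro holomorphic_intros pole_lemma_open[OF holo]) auto
  have g1_eq: "g1 w = g w * (1 - cnj a * w) / (w - a)" if "w \<noteq> a" for w
    using that zero by (simp add: g1_def)
  have C: "0 \<le> C"
    using order_trans[OF norm_ge_zero bound[of 0]] by simp
  have "norm (g1 w0) \<le> C" if w0: "w0 \<in> ball 0 1" for w0
  proof -
    define \<rho> where "\<rho> r = C * sqrt (1 + (1 - (norm a)\<^sup>2) * (1 - r\<^sup>2) / (r - norm a)\<^sup>2)" for r :: real
    have bound_r: "norm (g1 w0) \<le> \<rho> r" if r: "max (norm w0) (norm a) < r" "r < 1" for r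
    proof (rule maximum_modulus_frontier[of g1 "ball 0 r"])
      have r0: "0 < r"
        using r norm_ge_zero[of a] by linarith
      have sub: "cball 0 r \<subseteq> ball 0 1"
        using r by auto
      show "g1 holomorphic_on interior (ball 0 r)"
        using g1_holo by (rule holomorphic_on_subset) (use sub in auto)
      show "continuous_on (closure (ball 0 r)) g1"
        using r0 holomorphic_on_imp_continuous_on[OF holomorphic_on_subset[OF g1_holo sub]] by simp
      show "w0 \<in> ball 0 r"
        using r by auto
      fix w :: complex assume "w \<in> frontier (ball 0 r)"
      then have w: "norm w = r"
        using r norm_ge_zero[of a] by (simp add: frontier_ball)
      then have "w \<noteq> a" "w \<in> ball 0 1"
        using r by auto
      then have "norm (g1 w) = norm (g w) * (norm (1 - cnj a * w) / norm (w - a))"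
        by (simp add: g1_eq norm_mult norm_divide)
      also have "\<dots> \<le> \<rho> r"
        unfolding \<rho>_def w[symmetric] using w r C \<open>w \<in> ball 0 1\<close>
        by (intro mult_mono bound norm_inverse_blaschke_factor_le) auto
      finally show "norm (g1 w) \<le> \<rho> r" .
    qed simp
    have "max (norm w0) (norm a) < 1"
      using w0 a by auto
    then have "\<forall>\<^sub>F r in at_left 1. norm (g1 w0) \<le> \<rho> r"
      unfolding eventually_at_left[OF \<open>max (norm w0) (norm a) < 1\<close>]
      by (auto intro!: exI[of _ "max (norm w0) (norm a)"] bound_r)
    moreover have "(\<rho> \<longlongrightarrow> \<rho> 1) (at_left 1)"
      unfolding \<rho>_def using a by (intro tendsto_intros) auto
    ultimately have "norm (g1 w0) \<le> \<rho> 1"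
      by (intro tendsto_lowerbound) auto
    then show ?thesis
      by (simp add: \<rho>_def)
  qed
  with g1_holo g1_eq that show ?thesis
    by blast
qed

lemma norm_le_prod_norm_zeros_disc:
  fixes g :: "complex \<Rightarrow> complex" and a :: "nat \<Rightarrow> complex"
  assumes "inj_on a {..<N}" "\<And>k. k < N \<Longrightarrow> a k \<in> ball 0 1" "\<And>k. k < N \<Longrightarrow> a k \<noteq> 0"
    and "g holomorphic_on ball 0 1" "\<And>w. w \<in> ball 0 1 \<Longrightarrow> norm (g w) \<le> C"
    and "\<And>k. k < N \<Longrightarrow> g (a k) = 0"
  shows "norm (g 0) \<le> C * (\<Prod>k<N. norm (a k))"
  using assms
proof (induction N arbitrary: g)
  case 0
  then show ?case by auto
next
  case (Suc N)
  obtain g1 where g1_holo: "g1 holomorphic_on ball 0 1" and g1_bound: "\<And>w. w \<in> ball 0 1 \<Longrightarrow> norm (g1 w) \<le> C"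
    and g1_eq: "\<And>w. w \<noteq> a N \<Longrightarrow> g1 w = g w * (1 - cnj (a N) * w) / (w - a N)"
    using divide_blaschke_factor_bounded[OF Suc.prems(4,5)] Suc.prems(2,6) by blast
  have "a k \<noteq> a N" if "k < N" for k
    using Suc.prems(1) that by (auto dest: inj_onD)
  then have "g1 (a k) = 0" if "k < N" for k
    using that g1_eq Suc.prems(6) by simp
  then have IH: "norm (g1 0) \<le> C * (\<Prod>k<N. norm (a k))"
    using Suc.prems(1-3) g1_holo g1_bound
    by (intro Suc.IH) (auto intro: inj_on_subset)
  have "norm (g 0) = norm (g1 0) * norm (a N)"
    using g1_eq[of 0] Suc.prems(3)[of N] by (simp add: norm_divide norm_minus_cancel)
  also have "\<dots> \<le> C * (\<Prod>k<N. norm (a k)) * norm (a N)"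
    by (rule mult_right_mono[OF IH]) simp
  finally show ?case
    by (simp add: mult.assoc)
qed

lemma Re_halfplane_cayley_pos:
  assumes "0 < Re z0" "norm w < 1"
  shows "0 < Re ((z0 + cnj z0 * w) / (1 - w))"
proof -
  have "Re ((z0 + cnj z0 * w) / (1 - w)) = Re z0 * (1 - (norm w)\<^sup>2) / (norm (1 - w))\<^sup>2"
    by (simp only: Re_divide cmod_power2) (simp add: algebra_simps power2_eq_square)
  moreover have "w \<noteq> 1" "(norm w)\<^sup>2 < 1"
    using assms(2) by (auto simp: power_less_one_iff abs_square_less_1)
  ultimately show ?thesis
    using assms(1) by simp
qed

lemma halfplane_cayley_inverse:
  assumes "0 < Re z0" "0 < Re z"
  shows "(z0 + cnj z0 * ((z - z0) / (z + cnj z0))) / (1 - (z - z0) / (z + cnj z0)) = z"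
proof -
  have nonzero: "z + cnj z0 \<noteq> 0" "z0 + cnj z0 \<noteq> 0"
    using assms by (auto simp: complex_eq_iff)
  then have "1 - (z - z0) / (z + cnj z0) = (z0 + cnj z0) / (z + cnj z0)"
    "z0 + cnj z0 * ((z - z0) / (z + cnj z0)) = z * (z0 + cnj z0) / (z + cnj z0)"
    by (simp_all add: field_simps)
  then show ?thesis
    using nonzero by simp
qed

lemma norm_halfplane_cayley_of_real_power2:
  assumes "0 < Re z0" "0 < r"
  shows "(norm ((of_real r - z0) / (of_real r + cnj z0)))\<^sup>2
    = 1 - 4 * r * Re z0 / ((r + Re z0)\<^sup>2 + (Im z0)\<^sup>2)"
proof -
  have "(norm (of_real r - z0))\<^sup>2 = (r - Re z0)\<^sup>2 + (Im z0)\<^sup>2"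
    "(norm (of_real r + cnj z0))\<^sup>2 = (r + Re z0)\<^sup>2 + (Im z0)\<^sup>2"
    by (simp_all only: cmod_power2) simp_all
  moreover have "0 < (r + Re z0)\<^sup>2 + (Im z0)\<^sup>2"
    using assms by (intro add_pos_nonneg) auto
  ultimately show ?thesis
    by (simp add: norm_divide power_divide field_simps power2_eq_square)
qed

lemma not_summable_halfplane_blaschke_terms:
  fixes m :: "nat \<Rightarrow> real"
  assumes c: "0 < c" and m: "\<And>k. c \<le> m k" and m_div: "\<not> summable (\<lambda>k. 1 / m k)" and x0: "0 < x0"
  shows "\<not> summable (\<lambda>k. 4 * m k * x0 / ((m k + x0)\<^sup>2 + y0\<^sup>2))"
proof
  define K where "K = (1 + x0 / c)\<^sup>2 + (y0 / c)\<^sup>2"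
  have "0 < 1 + x0 / c"
    using divide_pos_pos[OF x0 c] by linarith
  then have K: "0 < K"
    unfolding K_def by (intro add_pos_nonneg) auto
  have m_pos: "0 < m k" for k
    using c m[of k] by linarith
  have bound: "1 / m k \<le> K / (4 * x0) * (4 * m k * x0 / ((m k + x0)\<^sup>2 + y0\<^sup>2))" for k
  proof -
    note mk = m_pos[of k]
    have "x0 \<le> m k * (x0 / c)"
      using m[of k] c x0 by (simp add: field_simps mult_right_mono)
    then have "m k + x0 \<le> m k * (1 + x0 / c)"
      by (simp add: algebra_simps)
    then have "(m k + x0)\<^sup>2 \<le> (m k)\<^sup>2 * (1 + x0 / c)\<^sup>2"
      unfolding power_mult_distrib[symmetric] using mk x0 by (intro power_mono) auto
    moreover have "y0\<^sup>2 * c\<^sup>2 \<le> y0\<^sup>2 * (m k)\<^sup>2"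
      using m[of k] c by (intro mult_left_mono power_mono) auto
    then have "y0\<^sup>2 \<le> (m k)\<^sup>2 * (y0 / c)\<^sup>2"
      using c by (simp add: field_simps power_divide)
    ultimately have "(m k + x0)\<^sup>2 + y0\<^sup>2 \<le> (m k)\<^sup>2 * K"
      unfolding K_def by (simp add: distrib_left add_mono)
    moreover have "0 < (m k + x0)\<^sup>2 + y0\<^sup>2"
      using mk x0 by (intro add_pos_nonneg) auto
    ultimately show ?thesis
      using mk x0 K by (simp add: field_simps power2_eq_square)
  qed
  assume "summable (\<lambda>k. 4 * m k * x0 / ((m k + x0)\<^sup>2 + y0\<^sup>2))"
  then have "summable (\<lambda>k. K / (4 * x0) * (4 * m k * x0 / ((m k + x0)\<^sup>2 + y0\<^sup>2)))"
    by (rule summable_mult)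
  then have "summable (\<lambda>k. 1 / m k)"
    by (rule summable_comparison_test'[where N = 0]) (use bound m_pos in \<open>simp add: less_imp_le\<close>)
  with m_div show False ..
qed

lemma prod_less_if_not_summable:
  fixes b q :: "nat \<Rightarrow> real"
  assumes b: "\<And>k. 0 \<le> b k" "\<And>k. (b k)\<^sup>2 \<le> 1 - q k"
    and q: "\<And>k. 0 \<le> q k" "\<not> summable q" and \<epsilon>: "0 < \<epsilon>"
  shows "\<exists>N. (\<Prod>k<N. b k) < \<epsilon>"
proof -
  obtain N where N: "- 2 * ln \<epsilon> < (\<Sum>k<N. q k)"
    using q summableI_nonneg_bounded[of q "- 2 * ln \<epsilon>"] by (meson not_le)
  have "b k \<le> exp (- q k / 2)" for k
  proof (rule power2_le_imp_le)
    have "1 - q k \<le> exp (- q k)"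
      using exp_ge_add_one_self[of "- q k"] by simp
    also have "\<dots> = (exp (- q k / 2))\<^sup>2"
      by (simp add: power2_eq_square flip: exp_add)
    finally show "(b k)\<^sup>2 \<le> (exp (- q k / 2))\<^sup>2"
      using b(2)[of k] by linarith
  qed simp
  then have "(\<Prod>k<N. b k) \<le> (\<Prod>k<N. exp (- q k / 2))"
    using b(1) by (intro prod_mono) auto
  also have "\<dots> = exp (- (\<Sum>k<N. q k) / 2)"
    using exp_sum[of "{..<N}" "\<lambda>k. - q k / 2"] by (simp add: sum_negf sum_divide_distrib)
  also have "\<dots> < exp (ln \<epsilon>)"
    using N by (subst exp_less_cancel_iff) linarith
  finally show ?thesis
    using \<epsilon> by auto
qed

lemma bounded_holomorphic_halfplane_le_prod:
  fixes F :: "complex \<Rightarrow> complex" and m :: "nat \<Rightarrow> real"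
  assumes holo: "F holomorphic_on {z. 0 < Re z}" and bound: "\<And>z. 0 < Re z \<Longrightarrow> norm (F z) \<le> C"
    and m: "inj m" "\<And>k. 0 < m k" and zeros: "\<And>k. F (of_real (m k)) = 0"
    and z0: "0 < Re z0" "\<And>k. z0 \<noteq> of_real (m k)"
  shows "norm (F z0) \<le> C * (\<Prod>k<N. norm ((of_real (m k) - z0) / (of_real (m k) + cnj z0)))"
proof -
  define \<phi> where "\<phi> w = (z0 + cnj z0 * w) / (1 - w)" for w
  define a where "a k = (of_real (m k) - z0) / (of_real (m k) + cnj z0)" for k
  have a_disc: "a k \<in> ball 0 1" for k
  proof -
    have "0 < 4 * m k * Re z0 / ((m k + Re z0)\<^sup>2 + (Im z0)\<^sup>2)"
      using m(2)[of k] z0 by (intro divide_pos_pos add_pos_nonneg) auto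
    then have "(norm (a k))\<^sup>2 < 1\<^sup>2"
      unfolding a_def norm_halfplane_cayley_of_real_power2[OF z0(1) m(2)] by simp
    then show ?thesis
      by (simp add: power_less_imp_less_base)
  qed
  have \<phi>_a: "\<phi> (a k) = of_real (m k)" for k
    unfolding \<phi>_def a_def using z0 m(2) by (intro halfplane_cayley_inverse) auto
  have \<phi>_0: "\<phi> 0 = z0"
    by (simp add: \<phi>_def)
  have a_nonzero: "a k \<noteq> 0" for k
    using \<phi>_a[of k] \<phi>_0 z0(2) by auto
  have "inj a"
    using \<phi>_a m(1) by (metis injD injI of_real_eq_iff)
  have \<phi>_disc: "0 < Re (\<phi> w)" if "w \<in> ball 0 1" for w
    unfolding \<phi>_def using z0 that by (intro Re_halfplane_cayley_pos) auto
  have g_holo: "(F \<circ> \<phi>) holomorphic_on ball 0 1"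
    unfolding \<phi>_def using \<phi>_disc
    by (intro holomorphic_on_compose_gen[OF _ holo] holomorphic_intros) (auto simp: \<phi>_def)
  have g_bound: "norm ((F \<circ> \<phi>) w) \<le> C" if "w \<in> ball 0 1" for w
    using bound \<phi>_disc[OF that] by simp
  have g_zeros: "(F \<circ> \<phi>) (a k) = 0" for k
    by (simp add: \<phi>_a zeros)
  have "norm ((F \<circ> \<phi>) 0) \<le> C * (\<Prod>k<N. norm (a k))"
    by (rule norm_le_prod_norm_zeros_disc[OF inj_on_subset[OF \<open>inj a\<close> subset_UNIV] a_disc a_nonzero
          g_holo g_bound g_zeros])
  then show ?thesis
    by (simp add: \<phi>_0 a_def)
qed

text \<open>The Cayley transform sending \<open>0\<close> to \<open>z\<^sub>0\<close> maps the zeros \<open>m\<^sub>k\<close> to points \<open>a\<^sub>k\<close> of the unit disc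
  with \<open>\<Sum> (1 - \<bar>a\<^sub>k\<bar>\<^sup>2) = \<infinity>\<close>, violating the Blaschke condition.\<close>

lemma bounded_holomorphic_halfplane_eq_0:
  fixes F :: "complex \<Rightarrow> complex" and m :: "nat \<Rightarrow> real"
  assumes holo: "F holomorphic_on {z. 0 < Re z}" and bound: "\<And>z. 0 < Re z \<Longrightarrow> norm (F z) \<le> C"
    and m_pos: "0 < m 0" and m_mono: "strict_mono m" and m_div: "\<not> summable (\<lambda>i. 1 / m i)"
    and zeros: "\<And>i. F (of_real (m i)) = 0" and z0: "0 < Re z0"
  shows "F z0 = 0"
proof (cases "\<exists>i. z0 = of_real (m i)")
  case True
  then show ?thesis
    using zeros by auto
next
  case False
  define q where "q k = 4 * m k * Re z0 / ((m k + Re z0)\<^sup>2 + (Im z0)\<^sup>2)" for k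
  have m_ge: "m 0 \<le> m k" for k
    using strict_mono_less_eq[OF m_mono, of 0 k] by simp
  then have m_gt: "0 < m k" for k
    using m_pos order_less_le_trans by blast
  have F_z0: "norm (F z0) \<le> C * (\<Prod>k<N. norm ((of_real (m k) - z0) / (of_real (m k) + cnj z0)))" for N
    using False m_gt strict_mono_imp_inj_on[OF m_mono]
    by (intro bounded_holomorphic_halfplane_le_prod[OF holo bound _ _ zeros z0]) auto
  have C: "0 \<le> C"
    using bound[OF z0] norm_ge_zero[of "F z0"] by linarith
  have "\<not> summable q"
    unfolding q_def using m_pos m_ge m_div z0 by (rule not_summable_halfplane_blaschke_terms)
  show ?thesis
  proof (rule ccontr)
    assume "F z0 \<noteq> 0"
    then have \<epsilon>: "0 < norm (F z0) / (C + 1)"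
      using C by simp
    have q_nonneg: "0 \<le> q k" for k
      unfolding q_def using m_gt[of k] z0 by (intro divide_nonneg_nonneg) auto
    have norm_sq: "(norm ((of_real (m k) - z0) / (of_real (m k) + cnj z0)))\<^sup>2 \<le> 1 - q k" for k
      using norm_halfplane_cayley_of_real_power2[OF z0 m_gt] by (simp add: q_def)
    obtain N where N:
      "(\<Prod>k<N. norm ((of_real (m k) - z0) / (of_real (m k) + cnj z0))) < norm (F z0) / (C + 1)"
      using prod_less_if_not_summable[OF norm_ge_zero norm_sq q_nonneg \<open>\<not> summable q\<close> \<epsilon>] by blast
    have "norm (F z0) \<le> C * (norm (F z0) / (C + 1))"
      using F_z0[of N] N C by (meson less_imp_le mult_left_mono order_trans)
    also have "\<dots> < norm (F z0)"
      using \<open>F z0 \<noteq> 0\<close> C by (simp add: field_simps)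
    finally show False by simp
  qed
qed

lemma weighted_laplace_eq_if_eq_on_seq:
  fixes m :: "nat \<Rightarrow> real"
  assumes m_pos: "0 < m 0" and m_mono: "strict_mono m" and m_div: "\<not> summable (\<lambda>i. 1 / m i)"
    and rv1: "weighted_nonneg_rv M1 X1 w1" and rv2: "weighted_nonneg_rv M2 X2 w2"
    and eq: "\<And>i. (\<integral>\<omega>. w1 \<omega> * exp (- m i * X1 \<omega>) \<partial>M1) = (\<integral>\<omega>. w2 \<omega> * exp (- m i * X2 \<omega>) \<partial>M2)"
    and z: "0 < Re z"
  shows "weighted_laplace M1 X1 w1 z = weighted_laplace M2 X2 w2 z"
proof -
  interpret rv1: weighted_nonneg_rv M1 X1 w1 by (rule rv1)
  interpret rv2: weighted_nonneg_rv M2 X2 w2 by (rule rv2)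
  have holo: "(\<lambda>z. weighted_laplace M1 X1 w1 z - weighted_laplace M2 X2 w2 z) holomorphic_on {z. 0 < Re z}"
    by (intro holomorphic_intros rv1.weighted_laplace_holomorphic rv2.weighted_laplace_holomorphic)
  have bound: "norm (weighted_laplace M1 X1 w1 z - weighted_laplace M2 X2 w2 z) \<le> 2" if "0 < Re z" for z
    using norm_triangle_ineq4[of "weighted_laplace M1 X1 w1 z" "weighted_laplace M2 X2 w2 z"]
      rv1.norm_weighted_laplace_le_1[of z] rv2.norm_weighted_laplace_le_1[of z] that
    by simp
  have zeros: "weighted_laplace M1 X1 w1 (of_real (m i)) - weighted_laplace M2 X2 w2 (of_real (m i)) = 0" for i
    using eq[of i] by (simp add: weighted_laplace_of_real)
  have "weighted_laplace M1 X1 w1 z - weighted_laplace M2 X2 w2 z = 0"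
    by (rule bounded_holomorphic_halfplane_eq_0[OF holo bound m_pos m_mono m_div zeros z])
  then show ?thesis
    by simp
qed

lemma weighted_cdf_eq_if_laplace_eq_on_seq:
  fixes m :: "nat \<Rightarrow> real"
  assumes "0 < m 0" "strict_mono m" "\<not> summable (\<lambda>i. 1 / m i)"
    and "weighted_nonneg_rv M1 X1 w1" "weighted_nonneg_rv M2 X2 w2"
    and "\<And>i. (\<integral>\<omega>. w1 \<omega> * exp (- m i * X1 \<omega>) \<partial>M1) = (\<integral>\<omega>. w2 \<omega> * exp (- m i * X2 \<omega>) \<partial>M2)"
  shows "(\<integral>\<omega>. indicator {..y} (X1 \<omega>) * w1 \<omega> \<partial>M1) = (\<integral>\<omega>. indicator {..y} (X2 \<omega>) * w2 \<omega> \<partial>M2)"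
proof (rule weighted_cdf_eq_if_weighted_laplace_eq_on_line[OF assms(4,5)])
  fix t :: real
  show "weighted_laplace M1 X1 w1 (1 - \<i> * of_real t) = weighted_laplace M2 X2 w2 (1 - \<i> * of_real t)"
    by (rule weighted_laplace_eq_if_eq_on_seq[OF assms]) simp
qed

lemma weighted_nonneg_rv_exp:
  fixes X Y :: "'a \<Rightarrow> real"
  assumes "prob_space M" "X \<in> borel_measurable M" "Y \<in> borel_measurable M"
    and "\<forall>\<omega>\<in>space M. 0 \<le> X \<omega>" "\<forall>\<omega>\<in>space M. 0 \<le> Y \<omega>" and "0 \<le> t"
  shows "weighted_nonneg_rv M X (\<lambda>\<omega>. exp (- t * Y \<omega>))"
proof -
  note [measurable] = assms(3)
  have "(\<lambda>\<omega>. exp (- t * Y \<omega>)) \<in> borel_measurable M"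
    by measurable
  then show ?thesis
    using assms by (intro weighted_nonneg_rv.intro weighted_nonneg_rv_axioms.intro) auto
qed

lemma weighted_nonneg_rv_indicator:
  fixes X Y :: "'a \<Rightarrow> real"
  assumes "prob_space M" "X \<in> borel_measurable M" "Y \<in> borel_measurable M"
    and "\<forall>\<omega>\<in>space M. 0 \<le> Y \<omega>"
  shows "weighted_nonneg_rv M Y (\<lambda>\<omega>. indicator {..x} (X \<omega>))"
proof -
  note [measurable] = assms(2)
  have "(\<lambda>\<omega>. indicator {..x} (X \<omega>) :: real) \<in> borel_measurable M"
    by measurable
  then show ?thesis
    using assms by (intro weighted_nonneg_rv.intro weighted_nonneg_rv_axioms.intro) auto
qed

lemma bivariate_LST_eq_integral:
  "bivariate_LST M X Y s t = (\<integral>\<omega>. exp (- t * Y \<omega>) * exp (- s * X \<omega>) \<partial>M)"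
  unfolding bivariate_LST_def
  by (intro Bochner_Integration.integral_cong refl) (simp add: algebra_simps flip: exp_add)

lemma joint_cdf_eq_integral:
  "joint_cdf M X Y x y = (\<integral>\<omega>. indicator {..y} (Y \<omega>) * indicator {..x} (X \<omega>) \<partial>M)"
proof -
  have "joint_cdf M X Y x y = (\<integral>\<omega>. indicator {\<omega> \<in> space M. X \<omega> \<le> x \<and> Y \<omega> \<le> y} \<omega> \<partial>M)"
    by (simp add: joint_cdf_def Int_absorb2)
  also have "\<dots> = (\<integral>\<omega>. indicator {..y} (Y \<omega>) * indicator {..x} (X \<omega>) \<partial>M)"
    by (intro Bochner_Integration.integral_cong refl) (auto simp: indicator_def)
  finally show ?thesis .
qed

theorem theorem3:
  fixes m n :: "nat \<Rightarrow> real"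
    and M1 :: "'a measure" and X1 Y1 :: "'a \<Rightarrow> real"
    and M2 :: "'b measure" and X2 Y2 :: "'b \<Rightarrow> real"
  assumes m_pos: "m 0 > 0" and m_mono: "strict_mono m"
    and m_div: "\<not> summable (\<lambda>i. 1 / m i)"
    and n_pos: "n 0 > 0" and n_mono: "strict_mono n"
    and n_div: "\<not> summable (\<lambda>j. 1 / n j)"
    and P1: "prob_space M1"
    and X1_rv: "X1 \<in> borel_measurable M1" and Y1_rv: "Y1 \<in> borel_measurable M1"
    and X1_nn: "\<forall>\<omega>\<in>space M1. X1 \<omega> \<ge> 0" and Y1_nn: "\<forall>\<omega>\<in>space M1. Y1 \<omega> \<ge> 0"
    and P2: "prob_space M2"
    and X2_rv: "X2 \<in> borel_measurable M2" and Y2_rv: "Y2 \<in> borel_measurable M2"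
    and X2_nn: "\<forall>\<omega>\<in>space M2. X2 \<omega> \<ge> 0" and Y2_nn: "\<forall>\<omega>\<in>space M2. Y2 \<omega> \<ge> 0"
    and eq: "\<forall>i j. bivariate_LST M1 X1 Y1 (m i) (n j) = bivariate_LST M2 X2 Y2 (m i) (n j)"
  shows "joint_cdf M1 X1 Y1 = joint_cdf M2 X2 Y2"
proof (intro ext)
  fix x y
  have n_nonneg: "0 \<le> n j" for j
    using n_pos strict_mono_less_eq[OF n_mono, of 0 j] by simp
  have marginal_eq: "(\<integral>\<omega>. indicator {..x} (X1 \<omega>) * exp (- n j * Y1 \<omega>) \<partial>M1)
      = (\<integral>\<omega>. indicator {..x} (X2 \<omega>) * exp (- n j * Y2 \<omega>) \<partial>M2)" for j
    by (rule weighted_cdf_eq_if_laplace_eq_on_seq[OF m_pos m_mono m_div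
          weighted_nonneg_rv_exp[OF P1 X1_rv Y1_rv X1_nn Y1_nn n_nonneg]
          weighted_nonneg_rv_exp[OF P2 X2_rv Y2_rv X2_nn Y2_nn n_nonneg]])
       (use eq in \<open>simp add: bivariate_LST_eq_integral\<close>)
  have "(\<integral>\<omega>. indicator {..y} (Y1 \<omega>) * indicator {..x} (X1 \<omega>) \<partial>M1)
      = (\<integral>\<omega>. indicator {..y} (Y2 \<omega>) * indicator {..x} (X2 \<omega>) \<partial>M2 :: real)"
    by (rule weighted_cdf_eq_if_laplace_eq_on_seq[OF n_pos n_mono n_div
          weighted_nonneg_rv_indicator[OF P1 X1_rv Y1_rv Y1_nn]
          weighted_nonneg_rv_indicator[OF P2 X2_rv Y2_rv Y2_nn] marginal_eq])
  then show "joint_cdf M1 X1 Y1 x y = joint_cdf M2 X2 Y2 x y"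
    by (simp add: joint_cdf_eq_integral)
qed

end
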